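(* Assume Assumption 1, and assume that for every finite collection of samples one of the following holds: (1) the game $\mathcal G$ admits a unique Nash equilibrium; or (2) $g(x,\theta)=\tilde g(\sigma(x),\theta)$ depends on $x$ only through the aggregate $\sigma(x)=\sum_{i\in\mathcal N}x_i$, and all Nash equilibria of $\mathcal G$ have the same aggregate $\sigma(x)$. Given samples $\theta_1,\dots,\theta_M$, let $(x^*,y^* )$ be the minimum-Euclidean-norm solution of $\mathrm{VI}(F,\mathcal X\times\Delta_M)$ (so $x^*=\Phi(\theta_1,\dots,\theta_M)$), and let $\mathcal Y^*=\{m\in\{1,\dots,M\}: y^*_m>0\}$. Then $\{\theta_m\}_{m\in\mathcal Y^*}$ is a compression set, i.e. $\Phi(\{\theta_m\}_{m\in\mathcal Y^*})=\Phi(\theta_1,\dots,\theta_M)=x^*$.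
   Context: Let $\mathcal N=\{1,\dots,N\}$ be a set of agents. Agent $i$ chooses $x_i\in\mathcal X_i\subset\mathbb R^n$; write $x=(x_i)_{i\in\mathcal N}\in\mathcal X=\mathcal X_1\times\cdots\times\mathcal X_N\subset\mathbb R^{nN}$ and $x_{-i}=(x_j)_{j\neq i}$. Let $\Theta$ be a set, $f_i:\mathbb R^{nN}\to\mathbb R$, $g:\mathbb R^{nN}\times\Theta\to\mathbb R$. For samples $S=\{\vartheta_1,\dots,\vartheta_K\}$, the game $\mathcal G(S)$ has each agent $i$ minimize over $x_i\in\mathcal X_i$ the cost $f_i(x)+\max_{\vartheta\in S}g(x,\vartheta)$; a Nash equilibrium is $x^*\in\mathcal X$ with $x^*_i$ optimal for each $i$ given $x^*_{-i}$. Assumption 1 (in case (2) with $g(\cdot,x_{-i},\theta)$ read as $\tilde g(\sigma(\cdot,x_{-i}),\theta)$): (i) for every $\theta\in\Theta$ and every $x_{-i}\in\prod_{j\ne i}\mathcal X_j$, $f_i(\cdot,x_{-i})+g(\cdot,x_{-i},\theta)$ is convex and continuously differentiable, and each $\mathcal X_i$ is nonempty, compact and convex; (ii) for every $\theta$ and $i$, $g(\cdot,\theta)$ and $f_i$ are twice differentiable on an open convex set containing $\mathcal X$; (iii) there are $\chi^f,\chi^g\in\mathbb R$ with $\chi^f+\chi^g\ge0$ such that for all $u,v\in\mathbb R^{nN}$ and $\theta\in\Theta$: $(u-v)^\top\big((\nabla_{u_i}f_i(u))_{i}-(\nabla_{v_i}f_i(v))_{i}\big)\ge\chi^f\|u-v\|^2$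 and $(u-v)^\top(\nabla_u g(u,\theta)-\nabla_v g(v,\theta))\ge\chi^g\|u-v\|^2$. For samples $\vartheta_1,\dots,\vartheta_K$: $\Delta_K=\{y\in\mathbb R^K:y\ge0,\sum_m y_m=1\}$, $\hat g(x,y)=\sum_m y_m g(x,\vartheta_m)$, $F(x,y)=\big((\nabla_{x_i}f_i(x)+\nabla_{x_i}\hat g(x,y))_i,\ -(g(x,\vartheta_m))_{m=1}^K\big)$; $\mathrm{VI}(F,\mathcal X\times\Delta_K)$: find $z^*\in\mathcal X\times\Delta_K$ with $(z-z^* )^\top F(z^* )\ge0$ for all $z\in\mathcal X\times\Delta_K$. $\Phi(\vartheta_1,\dots,\vartheta_K)$ is the $x$-component of the minimum-Euclidean-norm solution of this VI. A subcollection $\mathcal C$ of $\{\theta_1,\dots,\theta_M\}$ is a compression set if $\Phi(\mathcal C)=\Phi(\theta_1,\dots,\theta_M)$. *)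

theory Defs
  imports "HOL-Analysis.Analysis"
begin

text \<open>Joint strategy profiles x = (x_i) are elements of real^'n^'i: the agents form
  the finite index type 'i, each x_i = x $ i lies in real^'n.  The Euclidean norm on
  real^'n^'i is the norm on R^{nN}.\<close>

definition upd :: "real^'n^'i \<Rightarrow> 'i \<Rightarrow> real^'n \<Rightarrow> real^'n^'i" where
  "upd x i xi = (\<chi> j. if j = i then xi else x $ j)"

definition profiles :: "('i \<Rightarrow> (real^'n) set) \<Rightarrow> (real^'n^'i) set" where
  "profiles X = {x. \<forall>i. x $ i \<in> X i}"

definition aggregate :: "real^'n^'i \<Rightarrow> real^'n" where
  "aggregate x = (\<Sum>i\<in>UNIV. x $ i)"

definition game_cost ::
  "('i \<Rightarrow> real^'n^'i \<Rightarrow> real) \<Rightarrow> (real^'n^'i \<Rightarrow> 'th \<Rightarrow> real) \<Rightarrow> 'th set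
     \<Rightarrow> 'i \<Rightarrow> real^'n^'i \<Rightarrow> real" where
  "game_cost f g S i x = f i x + Max ((\<lambda>\<theta>. g x \<theta>) ` S)"

definition is_NE ::
  "('i \<Rightarrow> (real^'n) set) \<Rightarrow> ('i \<Rightarrow> real^'n^'i \<Rightarrow> real) \<Rightarrow> (real^'n^'i \<Rightarrow> 'th \<Rightarrow> real)
     \<Rightarrow> 'th set \<Rightarrow> real^'n^'i \<Rightarrow> bool" where
  "is_NE X f g S x \<longleftrightarrow> x \<in> profiles X \<and>
     (\<forall>i. \<forall>xi\<in>X i. game_cost f g S i x \<le> game_cost f g S i (upd x i xi))"

definition prob_simplex :: "nat \<Rightarrow> (nat \<Rightarrow> real) set" where
  "prob_simplex K = {y. (\<forall>m<K. 0 \<le> y m) \<and> (\<forall>m\<ge>K. y m = 0) \<and> (\<Sum>m<K. y m) = 1}"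

text \<open>Df i x is the (full) gradient of f_i at x, Dg x theta the gradient of g(.,theta) at x.
  The map F of the VI, paired with a direction (x', y') - (x, y):
  (z'-z)^T F(z) = sum_i (x'_i - x_i) . (grad_{x_i} f_i(x) + sum_m y_m grad_{x_i} g(x,theta_m))
                  - sum_m (y'_m - y_m) g(x,theta_m).\<close>
definition VI_pairing ::
  "('i \<Rightarrow> real^'n^'i \<Rightarrow> real^'n^'i) \<Rightarrow> (real^'n^'i \<Rightarrow> 'th \<Rightarrow> real^'n^'i)
     \<Rightarrow> (real^'n^'i \<Rightarrow> 'th \<Rightarrow> real) \<Rightarrow> 'th list
     \<Rightarrow> real^'n^'i \<Rightarrow> (nat \<Rightarrow> real) \<Rightarrow> real^'n^'i \<Rightarrow> (nat \<Rightarrow> real) \<Rightarrow> real" where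
  "VI_pairing Df Dg g ths x y x' y' =
     (\<Sum>i\<in>UNIV. (x' $ i - x $ i) \<bullet>
        ((Df i x) $ i + (\<Sum>m<length ths. y m *\<^sub>R (Dg x (ths ! m)) $ i)))
     - (\<Sum>m<length ths. (y' m - y m) * g x (ths ! m))"

definition VI_sol ::
  "('i \<Rightarrow> (real^'n) set) \<Rightarrow> ('i \<Rightarrow> real^'n^'i \<Rightarrow> real^'n^'i) \<Rightarrow> (real^'n^'i \<Rightarrow> 'th \<Rightarrow> real^'n^'i)
     \<Rightarrow> (real^'n^'i \<Rightarrow> 'th \<Rightarrow> real) \<Rightarrow> 'th list \<Rightarrow> real^'n^'i \<Rightarrow> (nat \<Rightarrow> real) \<Rightarrow> bool" where
  "VI_sol X Df Dg g ths x y \<longleftrightarrow> x \<in> profiles X \<and> y \<in> prob_simplex (length ths) \<and>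
     (\<forall>x'\<in>profiles X. \<forall>y'\<in>prob_simplex (length ths). 0 \<le> VI_pairing Df Dg g ths x y x' y')"

definition sqnorm_xy :: "nat \<Rightarrow> real^'n^'i \<Rightarrow> (nat \<Rightarrow> real) \<Rightarrow> real" where
  "sqnorm_xy K x y = (norm x)^2 + (\<Sum>m<K. (y m)^2)"

definition VI_minnorm_sol ::
  "('i \<Rightarrow> (real^'n) set) \<Rightarrow> ('i \<Rightarrow> real^'n^'i \<Rightarrow> real^'n^'i) \<Rightarrow> (real^'n^'i \<Rightarrow> 'th \<Rightarrow> real^'n^'i)
     \<Rightarrow> (real^'n^'i \<Rightarrow> 'th \<Rightarrow> real) \<Rightarrow> 'th list \<Rightarrow> real^'n^'i \<Rightarrow> (nat \<Rightarrow> real) \<Rightarrow> bool" where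
  "VI_minnorm_sol X Df Dg g ths x y \<longleftrightarrow> VI_sol X Df Dg g ths x y \<and>
     (\<forall>x' y'. VI_sol X Df Dg g ths x' y' \<longrightarrow>
        sqnorm_xy (length ths) x y \<le> sqnorm_xy (length ths) x' y')"

definition Phi ::
  "('i \<Rightarrow> (real^'n) set) \<Rightarrow> ('i \<Rightarrow> real^'n^'i \<Rightarrow> real^'n^'i) \<Rightarrow> (real^'n^'i \<Rightarrow> 'th \<Rightarrow> real^'n^'i)
     \<Rightarrow> (real^'n^'i \<Rightarrow> 'th \<Rightarrow> real) \<Rightarrow> 'th list \<Rightarrow> real^'n^'i" where
  "Phi X Df Dg g ths = fst (THE z. VI_minnorm_sol X Df Dg g ths (fst z) (snd z))"

end

theory Submission
  imports Defs
begin

text \<open>The VI operator F is monotone (Assumption 1(iii)) and continuous, so by Minty's lemma the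
  solution set of the VI is convex and the strictly convex squared norm has a unique minimiser on
  it. Every VI solution (x, y) gives a Nash equilibrium x of the sampled game: y puts weight only
  on maximal constraint values, and each x_i minimises the convex Lagrangian
  f_i + \<Sum>_m y_m g(\<cdot>, \<theta>_m). Restricting (x*, y*) to the support of y* solves the reduced
  VI. Conversely, every solution (x', y') of the reduced VI is an equilibrium of the same game,
  so by uniqueness (or the common aggregate) it has the same constraint values as x*; padding y'
  with zeros then solves the full VI, so (x', y') cannot have smaller norm than the restriction
  of (x*, y*).\<close>

lemma convex_profiles: "(\<And>i. convex (X i)) \<Longrightarrow> convex (profiles X)"
  unfolding convex_def profiles_def by (auto intro: convexD)

lemma upd_in_profiles: "x \<in> profiles X \<Longrightarrow> xi \<in> X i \<Longrightarrow> upd x i xi \<in> profiles X"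
  by (auto simp: profiles_def upd_def)

lemma upd_self [simp]: "upd x i (x $ i) = x"
  by (simp add: upd_def vec_eq_iff)

lemma inner_upd_diff: "(upd x i xi - x) \<bullet> v = (xi - x $ i) \<bullet> (v $ i)"
proof -
  have "(upd x i xi - x) \<bullet> v = (\<Sum>j\<in>UNIV. if j = i then (xi - x $ i) \<bullet> (v $ i) else 0)"
    unfolding inner_vec_def by (rule sum.cong) (auto simp: upd_def)
  then show ?thesis by simp
qed

lemma upd_segment: "upd x i (x $ i + t *\<^sub>R (xi - x $ i)) = x + t *\<^sub>R (upd x i xi - x)"
  by (simp add: upd_def vec_eq_iff algebra_simps)

lemma prob_simplex_pos_dim: "y \<in> prob_simplex K \<Longrightarrow> 0 < K"
  by (rule ccontr) (auto simp: prob_simplex_def)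

lemma prob_simplex_vertex: "k < K \<Longrightarrow> (\<lambda>m. of_bool (m = k)) \<in> prob_simplex K"
  by (simp add: prob_simplex_def)

lemma prob_simplex_convex_comb:
  assumes "y1 \<in> prob_simplex K" "y2 \<in> prob_simplex K" "0 \<le> a" "a \<le> 1"
  shows "(\<lambda>m. (1 - a) * y1 m + a * y2 m) \<in> prob_simplex K"
  using assms by (simp add: prob_simplex_def sum.distrib flip: sum_distrib_left)

lemma prob_simplex_weighted_sum_le:
  assumes "y \<in> prob_simplex K" "\<And>m. m < K \<Longrightarrow> c m \<le> b"
  shows "(\<Sum>m<K. y m * c m) \<le> b"
proof -
  have "(\<Sum>m<K. y m * c m) \<le> (\<Sum>m<K. y m * b)"
    using assms by (intro sum_mono mult_left_mono) (auto simp: prob_simplex_def)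
  also have "\<dots> = b"
    using assms(1) by (simp add: prob_simplex_def flip: sum_distrib_right)
  finally show ?thesis .
qed

lemma sqnorm_xy_nonneg: "0 \<le> sqnorm_xy K x y"
  by (simp add: sqnorm_xy_def sum_nonneg)

lemma sqnorm_xy_eq_0_iff: "sqnorm_xy K x y = 0 \<longleftrightarrow> x = 0 \<and> (\<forall>m<K. y m = 0)"
  by (auto simp: sqnorm_xy_def add_nonneg_eq_0_iff sum_nonneg sum_nonneg_eq_0_iff)

lemma sqnorm_xy_midpoint:
  "sqnorm_xy K ((1/2) *\<^sub>R x1 + (1/2) *\<^sub>R x2) (\<lambda>m. (1/2) * y1 m + (1/2) * y2 m)
   = (sqnorm_xy K x1 y1 + sqnorm_xy K x2 y2) / 2 - sqnorm_xy K (x1 - x2) (\<lambda>m. y1 m - y2 m) / 4"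
proof -
  have "(norm ((1/2) *\<^sub>R x1 + (1/2) *\<^sub>R x2))^2 = ((norm x1)^2 + (norm x2)^2) / 2 - (norm (x1 - x2))^2 / 4"
    by (simp add: power2_norm_eq_inner inner_add_left inner_add_right inner_diff_left
        inner_diff_right inner_commute[of x2 x1] field_simps)
  moreover have "(\<Sum>m<K. ((1/2) * y1 m + (1/2) * y2 m)^2)
      = (\<Sum>m<K. (y1 m)^2 + (y2 m)^2) / 2 - (\<Sum>m<K. (y1 m - y2 m)^2) / 4"
  proof -
    have "(\<Sum>m<K. ((1/2) * y1 m + (1/2) * y2 m)^2)
        = (\<Sum>m<K. ((y1 m)^2 + (y2 m)^2) / 2 - (y1 m - y2 m)^2 / 4)"
      by (rule sum.cong) (auto simp: power2_eq_square field_simps)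
    then show ?thesis
      by (simp add: sum_subtractf flip: sum_divide_distrib)
  qed
  ultimately show ?thesis
    unfolding sqnorm_xy_def sum.distrib by (simp add: field_simps)
qed

definition pseudo_gradient :: "('i \<Rightarrow> real^'n^'i \<Rightarrow> real^'n^'i) \<Rightarrow> real^'n^'i \<Rightarrow> real^'n^'i" where
  "pseudo_gradient Df x = (\<chi> i. Df i x $ i)"

lemma VI_pairing_eq:
  "VI_pairing Df Dg g ths x y x' y' =
     (x' - x) \<bullet> (pseudo_gradient Df x + (\<Sum>m<length ths. y m *\<^sub>R Dg x (ths ! m)))
     - (\<Sum>m<length ths. (y' m - y m) * g x (ths ! m))"
proof -
  have inner_nth: "a \<bullet> b = (\<Sum>i\<in>UNIV. a $ i \<bullet> b $ i)" for a b :: "real^'n^'i"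
    by (simp add: inner_vec_def)
  show ?thesis
    unfolding VI_pairing_def inner_nth
    by (simp add: pseudo_gradient_def inner_add_right inner_sum_right sum.distrib
        sum_distrib_left sum.swap[of _ UNIV])
qed

lemma VI_pairing_self: "VI_pairing Df Dg g ths x y x y = 0"
  by (simp add: VI_pairing_eq)

lemma VI_pairing_fixed_x:
  "VI_pairing Df Dg g ths x y x y' = - (\<Sum>m<length ths. (y' m - y m) * g x (ths ! m))"
  by (simp add: VI_pairing_eq)

lemma VI_pairing_split:
  "VI_pairing Df Dg g ths x y x' y' = VI_pairing Df Dg g ths x y x' y + VI_pairing Df Dg g ths x y x y'"
  by (simp add: VI_pairing_eq)

lemma VI_pairing_convex_comb:
  "VI_pairing Df Dg g ths x y ((1 - a) *\<^sub>R x1 + a *\<^sub>R x2) (\<lambda>m. (1 - a) * y1 m + a * y2 m)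
   = (1 - a) * VI_pairing Df Dg g ths x y x1 y1 + a * VI_pairing Df Dg g ths x y x2 y2"
proof -
  let ?c = "\<lambda>m. g x (ths ! m)"
  have x_part: "(1 - a) *\<^sub>R x1 + a *\<^sub>R x2 - x = (1 - a) *\<^sub>R (x1 - x) + a *\<^sub>R (x2 - x)"
    by (simp add: algebra_simps)
  have "(\<Sum>m<length ths. ((1 - a) * y1 m + a * y2 m - y m) * ?c m)
      = (\<Sum>m<length ths. (1 - a) * ((y1 m - y m) * ?c m) + a * ((y2 m - y m) * ?c m))"
    by (rule sum.cong) (simp_all add: algebra_simps)
  also have "\<dots> = (1 - a) * (\<Sum>m<length ths. (y1 m - y m) * ?c m) + a * (\<Sum>m<length ths. (y2 m - y m) * ?c m)"
    by (simp add: sum.distrib sum_distrib_left)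
  finally show ?thesis
    unfolding VI_pairing_eq x_part by (simp add: algebra_simps)
qed

lemma VI_sol_weighted_constraint_eq_Max:
  assumes sol: "VI_sol X Df Dg g ths x y" and ne: "ths \<noteq> []"
  shows "(\<Sum>m<length ths. y m * g x (ths ! m)) = Max ((\<lambda>th. g x th) ` set ths)"
proof (rule antisym)
  have y: "y \<in> prob_simplex (length ths)"
    using sol by (simp add: VI_sol_def)
  then show "(\<Sum>m<length ths. y m * g x (ths ! m)) \<le> Max ((\<lambda>th. g x th) ` set ths)"
    by (rule prob_simplex_weighted_sum_le) simp
  have "Max ((\<lambda>th. g x th) ` set ths) \<in> (\<lambda>th. g x th) ` set ths"
    using ne by (intro Max_in) auto
  then obtain k where k: "k < length ths" "Max ((\<lambda>th. g x th) ` set ths) = g x (ths ! k)"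
    by (auto simp: in_set_conv_nth)
  have "0 \<le> VI_pairing Df Dg g ths x y x (\<lambda>m. of_bool (m = k))"
    using sol prob_simplex_vertex[OF k(1)] by (simp add: VI_sol_def)
  then show "Max ((\<lambda>th. g x th) ` set ths) \<le> (\<Sum>m<length ths. y m * g x (ths ! m))"
    using k by (simp add: VI_pairing_fixed_x left_diff_distrib sum_subtractf)
qed

lemma has_real_derivative_along_line:
  assumes "(h has_derivative (\<lambda>v. D \<bullet> v)) (at (x + t *\<^sub>R d))"
  shows "((\<lambda>s. h (x + s *\<^sub>R d)) has_real_derivative (d \<bullet> D)) (at t)"
proof -
  have "((\<lambda>s. x + s *\<^sub>R d) has_derivative (\<lambda>s. s *\<^sub>R d)) (at t)"
    by (auto intro!: derivative_eq_intros)
  from has_derivative_compose[OF this assms]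
  have "((\<lambda>s. h (x + s *\<^sub>R d)) has_derivative (\<lambda>s. s * (D \<bullet> d))) (at t)"
    by (simp add: o_def)
  moreover have "(\<lambda>s. s * (D \<bullet> d)) = (*) (d \<bullet> D)"
    by (auto simp: mult.commute inner_commute)
  ultimately show ?thesis
    by (simp add: has_field_derivative_def)
qed

lemma strongly_monotone_gradient_lower_bound:
  fixes h :: "'a::real_inner \<Rightarrow> real"
  assumes C: "convex C" "x \<in> C" "x' \<in> C"
    and deriv: "\<And>z. z \<in> C \<Longrightarrow> (h has_derivative (\<lambda>v. D z \<bullet> v)) (at z)"
    and mono: "\<And>u v. u \<in> C \<Longrightarrow> v \<in> C \<Longrightarrow> c * (norm (u - v))^2 \<le> (u - v) \<bullet> (D u - D v)"
  shows "c / 2 * (norm (x' - x))^2 \<le> h x' - h x - (x' - x) \<bullet> D x"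
proof -
  define d where "d = x' - x"
  define \<phi> where "\<phi> t = h (x + t *\<^sub>R d) - t * (d \<bullet> D x) - c / 2 * t^2 * (norm d)^2" for t
  have "\<phi> 0 \<le> \<phi> 1"
  proof (rule DERIV_nonneg_imp_nondecreasing[of 0 1])
    fix t :: real assume t: "0 \<le> t" "t \<le> 1"
    have "x + t *\<^sub>R d \<in> C"
      using convexD[OF C, of "1 - t" t] t by (simp add: d_def algebra_simps)
    then have "(\<phi> has_real_derivative (d \<bullet> D (x + t *\<^sub>R d) - d \<bullet> D x - c * t * (norm d)^2)) (at t)"
      unfolding \<phi>_def
      by (auto intro!: derivative_eq_intros has_real_derivative_along_line deriv)
    moreover have "c * t * (norm d)^2 \<le> d \<bullet> (D (x + t *\<^sub>R d) - D x)"
    proof (cases "t = 0")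
      case False
      have "t * (c * t * (norm d)^2) \<le> t * (d \<bullet> (D (x + t *\<^sub>R d) - D x))"
        using mono[OF \<open>x + t *\<^sub>R d \<in> C\<close> C(2)]
        by (simp add: power2_eq_square algebra_simps)
      then show ?thesis using False t by simp
    qed simp
    ultimately show "\<exists>y. (\<phi> has_real_derivative y) (at t) \<and> 0 \<le> y"
      by (auto simp: inner_diff_right)
  qed simp
  then show ?thesis by (simp add: \<phi>_def d_def)
qed

lemma convex_on_directional_derivative_le:
  fixes F :: "'a::real_normed_vector \<Rightarrow> real"
  assumes "convex_on S F" "a \<in> S" "b \<in> S"
    and "((\<lambda>t. F (a + t *\<^sub>R (b - a))) has_real_derivative D) (at 0)"
  shows "D \<le> F b - F a"
proof -
  have "((\<lambda>t. (F (a + t *\<^sub>R (b - a)) - F a) / t) \<longlongrightarrow> D) (at_right 0)"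
    using assms(4) unfolding has_field_derivative_iff by (auto intro: tendsto_within_subset)
  moreover have "eventually (\<lambda>t. (F (a + t *\<^sub>R (b - a)) - F a) / t \<le> F b - F a) (at_right 0)"
    using eventually_at_right_real[of 0 1]
  proof (rule eventually_mono)
    fix t :: real assume t: "t \<in> {0<..<1}"
    have "F (a + t *\<^sub>R (b - a)) \<le> (1 - t) * F a + t * F b"
      using convex_onD[OF assms(1), of t a b] t assms(2,3) by (simp add: algebra_simps)
    then have "F (a + t *\<^sub>R (b - a)) - F a \<le> (F b - F a) * t"
      by (simp add: algebra_simps)
    then show "(F (a + t *\<^sub>R (b - a)) - F a) / t \<le> F b - F a"
      using t by (simp add: pos_divide_le_eq)
  qed simp
  ultimately show ?thesis by (rule tendsto_upperbound) simp
qed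

lemma convex_on_nonneg_weighted_sum:
  assumes "finite A" "convex S" "\<And>m. m \<in> A \<Longrightarrow> 0 \<le> w m" "\<And>m. m \<in> A \<Longrightarrow> convex_on S (h m)"
  shows "convex_on S (\<lambda>u. \<Sum>m\<in>A. w m * h m u)"
  using assms by (induction A rule: finite_induct) (simp_all add: convex_on_const convex_on_add convex_on_cmul)

locale monotone_game =
  fixes X :: "'i::finite \<Rightarrow> (real^'n::finite) set"
    and f :: "'i \<Rightarrow> real^'n^'i \<Rightarrow> real"
    and Df :: "'i \<Rightarrow> real^'n^'i \<Rightarrow> real^'n^'i"
    and g :: "real^'n^'i \<Rightarrow> 'th \<Rightarrow> real"
    and Dg :: "real^'n^'i \<Rightarrow> 'th \<Rightarrow> real^'n^'i"
    and Theta :: "'th set"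
    and chi_f chi_g :: real
  assumes X_convex: "\<And>i. convex (X i)"
    and cost_convex: "\<And>i th x. th \<in> Theta \<Longrightarrow> x \<in> profiles X \<Longrightarrow>
          convex_on (X i) (\<lambda>xi. f i (upd x i xi) + g (upd x i xi) th)"
    and f_twice: "\<And>i. \<exists>U. open U \<and> convex U \<and> profiles X \<subseteq> U \<and>
          (\<forall>x\<in>U. (f i has_derivative (\<lambda>h. Df i x \<bullet> h)) (at x) \<and> Df i differentiable (at x))"
    and g_twice: "\<And>th. th \<in> Theta \<Longrightarrow> \<exists>U. open U \<and> convex U \<and> profiles X \<subseteq> U \<and>
          (\<forall>x\<in>U. ((\<lambda>u. g u th) has_derivative (\<lambda>h. Dg x th \<bullet> h)) (at x) \<and>
                   (\<lambda>u. Dg u th) differentiable (at x))"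
    and chi_sum: "chi_f + chi_g \<ge> 0"
    and f_mono: "\<And>u v. (u - v) \<bullet> ((\<chi> i. (Df i u) $ i) - (\<chi> i. (Df i v) $ i))
                         \<ge> chi_f * (norm (u - v))^2"
    and g_mono: "\<And>u v th. th \<in> Theta \<Longrightarrow> (u - v) \<bullet> (Dg u th - Dg v th) \<ge> chi_g * (norm (u - v))^2"
begin

lemma f_has_derivative: "x \<in> profiles X \<Longrightarrow> (f i has_derivative (\<lambda>h. Df i x \<bullet> h)) (at x)"
  using f_twice[of i] by blast

lemma Df_isCont: "x \<in> profiles X \<Longrightarrow> isCont (Df i) x"
  using f_twice[of i] by (blast intro: differentiable_imp_continuous_within)

lemma g_has_derivative:
  "th \<in> Theta \<Longrightarrow> x \<in> profiles X \<Longrightarrow> ((\<lambda>u. g u th) has_derivative (\<lambda>h. Dg x th \<bullet> h)) (at x)"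
  using g_twice[of th] by blast

lemma Dg_isCont: "th \<in> Theta \<Longrightarrow> x \<in> profiles X \<Longrightarrow> isCont (\<lambda>u. Dg u th) x"
  using g_twice[of th] by (blast intro: differentiable_imp_continuous_within)

lemma g_isCont: "th \<in> Theta \<Longrightarrow> x \<in> profiles X \<Longrightarrow> isCont (\<lambda>u. g u th) x"
  using g_has_derivative has_derivative_continuous by blast

lemma g_lower_bound:
  assumes "th \<in> Theta" "x \<in> profiles X" "x' \<in> profiles X"
  shows "chi_g / 2 * (norm (x' - x))^2 \<le> g x' th - g x th - (x' - x) \<bullet> Dg x th"
  using assms convex_profiles[OF X_convex] g_has_derivative g_mono
  by (intro strongly_monotone_gradient_lower_bound[where C = "profiles X"]) auto

lemma VI_pairing_monotone:
  assumes ths: "set ths \<subseteq> Theta" and x: "x \<in> profiles X" and x': "x' \<in> profiles X"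
    and y: "y \<in> prob_simplex (length ths)" and y': "y' \<in> prob_simplex (length ths)"
  shows "VI_pairing Df Dg g ths x y x' y' + VI_pairing Df Dg g ths x' y' x y \<le> 0"
proof -
  define K where "K = length ths"
  define n where "n = (norm (x' - x))^2"
  have th: "ths ! m \<in> Theta" if "m < K" for m
    using ths that by (auto simp: K_def)
  have "(\<Sum>m<K. y m * ((x' - x) \<bullet> Dg x (ths ! m) - (g x' (ths ! m) - g x (ths ! m)))) \<le> - (chi_g / 2 * n)"
    using g_lower_bound[OF th x x'] unfolding n_def
    by (intro prob_simplex_weighted_sum_le[OF y[folded K_def]]) (smt (verit))
  moreover have "(\<Sum>m<K. y' m * ((x - x') \<bullet> Dg x' (ths ! m) - (g x (ths ! m) - g x' (ths ! m)))) \<le> - (chi_g / 2 * n)"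
    using g_lower_bound[OF th x' x] unfolding n_def norm_minus_commute[of x]
    by (intro prob_simplex_weighted_sum_le[OF y'[folded K_def]]) (smt (verit))
  moreover have "chi_f * n \<le> (x' - x) \<bullet> (pseudo_gradient Df x' - pseudo_gradient Df x)"
    using f_mono[of x' x] by (simp add: pseudo_gradient_def n_def)
  moreover have "VI_pairing Df Dg g ths x y x' y' + VI_pairing Df Dg g ths x' y' x y
      = - ((x' - x) \<bullet> (pseudo_gradient Df x' - pseudo_gradient Df x))
        + (\<Sum>m<K. y m * ((x' - x) \<bullet> Dg x (ths ! m) - (g x' (ths ! m) - g x (ths ! m))))
        + (\<Sum>m<K. y' m * ((x - x') \<bullet> Dg x' (ths ! m) - (g x (ths ! m) - g x' (ths ! m))))"
    unfolding VI_pairing_eq K_def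
    by (simp add: inner_sum_right algebra_simps sum_subtractf sum.distrib)
  moreover have "0 \<le> (chi_f + chi_g) * n"
    using chi_sum by (simp add: n_def)
  ultimately show ?thesis by (simp add: algebra_simps)
qed

lemma VI_sol_imp_Minty:
  assumes "set ths \<subseteq> Theta" "VI_sol X Df Dg g ths x y"
    and "x' \<in> profiles X" "y' \<in> prob_simplex (length ths)"
  shows "VI_pairing Df Dg g ths x' y' x y \<le> 0"
  using assms VI_pairing_monotone[of ths x x' y y'] unfolding VI_sol_def by fastforce

lemma VI_pairing_tendsto:
  assumes ths: "set ths \<subseteq> Theta" and x: "x \<in> profiles X"
    and xt: "(xt \<longlongrightarrow> x) F" and yt: "\<And>m. ((\<lambda>t. yt t m) \<longlongrightarrow> y m) F"
  shows "((\<lambda>t. VI_pairing Df Dg g ths (xt t) (yt t) x' y') \<longlongrightarrow> VI_pairing Df Dg g ths x y x' y') F"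
proof -
  have th: "ths ! m \<in> Theta" if "m \<in> {..<length ths}" for m
    using ths that by auto
  show ?thesis
    unfolding VI_pairing_def
    by (intro tendsto_intros xt yt isCont_tendsto_compose[OF Df_isCont[OF x]]
        isCont_tendsto_compose[OF Dg_isCont[OF th x]] isCont_tendsto_compose[OF g_isCont[OF th x]])
qed

text \<open>Minty's lemma.\<close>
lemma Minty_imp_VI_sol:
  assumes ths: "set ths \<subseteq> Theta" and x: "x \<in> profiles X" and y: "y \<in> prob_simplex (length ths)"
    and Minty: "\<And>x' y'. x' \<in> profiles X \<Longrightarrow> y' \<in> prob_simplex (length ths) \<Longrightarrow>
              VI_pairing Df Dg g ths x' y' x y \<le> 0"
  shows "VI_sol X Df Dg g ths x y"
  unfolding VI_sol_def
proof (intro conjI ballI x y)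
  fix x' y' assume x': "x' \<in> profiles X" and y': "y' \<in> prob_simplex (length ths)"
  define xt where "xt t = (1 - t) *\<^sub>R x + t *\<^sub>R x'" for t :: real
  define yt where "yt t = (\<lambda>m. (1 - t) * y m + t * y' m)" for t :: real
  have nonneg: "0 \<le> VI_pairing Df Dg g ths (xt t) (yt t) x' y'" if t: "t \<in> {0<..<1}" for t
  proof -
    have "xt t \<in> profiles X"
      using convexD[OF convex_profiles[OF X_convex] x x', of "1 - t" t] t by (simp add: xt_def)
    moreover have "yt t \<in> prob_simplex (length ths)"
      using prob_simplex_convex_comb[OF y y', of t] t by (simp add: yt_def)
    ultimately have "(1 - t) * VI_pairing Df Dg g ths (xt t) (yt t) x y \<le> 0"
      using Minty t by (simp add: mult_nonneg_nonpos)
    moreover have "(1 - t) * VI_pairing Df Dg g ths (xt t) (yt t) x y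
        + t * VI_pairing Df Dg g ths (xt t) (yt t) x' y' = 0"
      using VI_pairing_convex_comb[of Df Dg g ths "xt t" "yt t" t x x' y y']
      by (simp add: VI_pairing_self flip: xt_def yt_def)
    ultimately show ?thesis
      using t by (simp add: zero_le_mult_iff add_eq_0_iff2)
  qed
  have "((\<lambda>t. VI_pairing Df Dg g ths (xt t) (yt t) x' y') \<longlongrightarrow> VI_pairing Df Dg g ths x y x' y')
      (at_right 0)"
    unfolding xt_def yt_def
    by (intro VI_pairing_tendsto[OF ths x]) (auto intro!: tendsto_eq_intros)
  moreover from nonneg have "eventually (\<lambda>t. 0 \<le> VI_pairing Df Dg g ths (xt t) (yt t) x' y') (at_right 0)"
    using eventually_at_right_real[OF zero_less_one] by (rule eventually_mono[rotated])
  ultimately show "0 \<le> VI_pairing Df Dg g ths x y x' y'"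
    by (rule tendsto_lowerbound) simp
qed

lemma VI_sol_convex_comb:
  assumes ths: "set ths \<subseteq> Theta" and s1: "VI_sol X Df Dg g ths x1 y1" and s2: "VI_sol X Df Dg g ths x2 y2"
    and a: "0 \<le> a" "a \<le> 1"
  shows "VI_sol X Df Dg g ths ((1 - a) *\<^sub>R x1 + a *\<^sub>R x2) (\<lambda>m. (1 - a) * y1 m + a * y2 m)"
proof (rule Minty_imp_VI_sol[OF ths])
  have x1: "x1 \<in> profiles X" and y1: "y1 \<in> prob_simplex (length ths)"
    and x2: "x2 \<in> profiles X" and y2: "y2 \<in> prob_simplex (length ths)"
    using s1 s2 by (auto simp: VI_sol_def)
  show "(1 - a) *\<^sub>R x1 + a *\<^sub>R x2 \<in> profiles X"
    using convexD[OF convex_profiles[OF X_convex] x1 x2, of "1 - a" a] a by simp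
  show "(\<lambda>m. (1 - a) * y1 m + a * y2 m) \<in> prob_simplex (length ths)"
    by (rule prob_simplex_convex_comb[OF y1 y2 a])
  fix x' y' assume "x' \<in> profiles X" "y' \<in> prob_simplex (length ths)"
  with VI_sol_imp_Minty[OF ths s1] VI_sol_imp_Minty[OF ths s2] a
  show "VI_pairing Df Dg g ths x' y' ((1 - a) *\<^sub>R x1 + a *\<^sub>R x2) (\<lambda>m. (1 - a) * y1 m + a * y2 m) \<le> 0"
    unfolding VI_pairing_convex_comb by (simp add: add_nonpos_nonpos mult_nonneg_nonpos)
qed

text \<open>The solution set is convex and the squared norm strictly convex, so the minimiser is unique.\<close>
lemma VI_minnorm_sol_unique:
  assumes ths: "set ths \<subseteq> Theta"
    and m1: "VI_minnorm_sol X Df Dg g ths x1 y1" and m2: "VI_minnorm_sol X Df Dg g ths x2 y2"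
  shows "x1 = x2 \<and> y1 = y2"
proof -
  define K where "K = length ths"
  have s1: "VI_sol X Df Dg g ths x1 y1" and s2: "VI_sol X Df Dg g ths x2 y2"
    using m1 m2 by (auto simp: VI_minnorm_sol_def)
  have "VI_sol X Df Dg g ths ((1/2) *\<^sub>R x1 + (1/2) *\<^sub>R x2) (\<lambda>m. (1/2) * y1 m + (1/2) * y2 m)"
    using VI_sol_convex_comb[OF ths s1 s2, of "1/2"] by simp
  then have "sqnorm_xy K x1 y1 \<le> sqnorm_xy K ((1/2) *\<^sub>R x1 + (1/2) *\<^sub>R x2) (\<lambda>m. (1/2) * y1 m + (1/2) * y2 m)"
    using m1 by (simp add: VI_minnorm_sol_def K_def)
  moreover have "sqnorm_xy K x1 y1 = sqnorm_xy K x2 y2"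
    using m1 m2 s1 s2 by (force simp: VI_minnorm_sol_def K_def)
  ultimately have "sqnorm_xy K (x1 - x2) (\<lambda>m. y1 m - y2 m) = 0"
    unfolding sqnorm_xy_midpoint using sqnorm_xy_nonneg[of K "x1 - x2" "\<lambda>m. y1 m - y2 m"] by simp
  moreover have "y1 m = 0" "y2 m = 0" if "K \<le> m" for m
    using s1 s2 that by (auto simp: VI_sol_def prob_simplex_def K_def)
  ultimately show ?thesis
    unfolding sqnorm_xy_eq_0_iff by (metis eq_iff_diff_eq_0 ext not_le)
qed

lemma lagrangian_has_derivative_along_line:
  assumes ths: "set ths \<subseteq> Theta" and x: "x \<in> profiles X"
  shows "((\<lambda>t. f i (x + t *\<^sub>R d) + (\<Sum>m<length ths. y m * g (x + t *\<^sub>R d) (ths ! m)))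
    has_real_derivative (d \<bullet> Df i x + (\<Sum>m<length ths. y m * (d \<bullet> Dg x (ths ! m))))) (at 0)"
proof -
  have "((\<lambda>t. f i (x + t *\<^sub>R d)) has_real_derivative (d \<bullet> Df i x)) (at 0)"
    using has_real_derivative_along_line[of "f i" "Df i x" x 0 d] f_has_derivative[OF x] by simp
  moreover have "((\<lambda>t. g (x + t *\<^sub>R d) (ths ! m)) has_real_derivative (d \<bullet> Dg x (ths ! m))) (at 0)"
    if "m \<in> {..<length ths}" for m
    using has_real_derivative_along_line[of "\<lambda>u. g u (ths ! m)" "Dg x (ths ! m)" x 0 d]
      g_has_derivative[OF subsetD[OF ths nth_mem] x] that by auto
  ultimately show ?thesis
    by (intro DERIV_add DERIV_sum DERIV_cmult)
qed

lemma VI_sol_minimizes_lagrangian: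
  assumes ths: "set ths \<subseteq> Theta" and sol: "VI_sol X Df Dg g ths x y" and xi: "xi \<in> X i"
  shows "f i x + (\<Sum>m<length ths. y m * g x (ths ! m))
    \<le> f i (upd x i xi) + (\<Sum>m<length ths. y m * g (upd x i xi) (ths ! m))"
proof -
  define K where "K = length ths"
  define L where "L u = f i u + (\<Sum>m<K. y m * g u (ths ! m))" for u
  have x: "x \<in> profiles X" and y: "y \<in> prob_simplex K"
    using sol by (auto simp: VI_sol_def K_def)
  have th: "ths ! m \<in> Theta" if "m < K" for m
    using ths that by (auto simp: K_def)
  have "L u = (\<Sum>m<K. y m * (f i u + g u (ths ! m)))" for u
    using y by (simp add: L_def prob_simplex_def distrib_left sum.distrib flip: sum_distrib_right)
  moreover have "convex_on (X i) (\<lambda>xi. \<Sum>m<K. y m * (f i (upd x i xi) + g (upd x i xi) (ths ! m)))"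
    using y X_convex cost_convex[OF th x] by (intro convex_on_nonneg_weighted_sum) (auto simp: prob_simplex_def)
  ultimately have convex: "convex_on (X i) (\<lambda>xi. L (upd x i xi))"
    by simp
  define d where "d = upd x i xi - x"
  have "((\<lambda>t. L (x + t *\<^sub>R d)) has_real_derivative
      (d \<bullet> Df i x + (\<Sum>m<K. y m * (d \<bullet> Dg x (ths ! m))))) (at 0)"
    unfolding L_def K_def by (rule lagrangian_has_derivative_along_line[OF ths x])
  moreover have "d \<bullet> Df i x + (\<Sum>m<K. y m * (d \<bullet> Dg x (ths ! m))) = VI_pairing Df Dg g ths x y (upd x i xi) y"
    unfolding VI_pairing_eq d_def K_def
    by (simp add: inner_upd_diff pseudo_gradient_def inner_add_right inner_sum_right)
  ultimately have "((\<lambda>t. L (upd x i (x $ i + t *\<^sub>R (xi - x $ i)))) has_real_derivative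
      VI_pairing Df Dg g ths x y (upd x i xi) y) (at 0)"
    by (simp add: upd_segment d_def)
  from convex_on_directional_derivative_le[OF convex _ xi this]
  have "VI_pairing Df Dg g ths x y (upd x i xi) y \<le> L (upd x i xi) - L x"
    using x by (simp add: profiles_def)
  moreover have "0 \<le> VI_pairing Df Dg g ths x y (upd x i xi) y"
    using sol upd_in_profiles[OF x xi] by (simp add: VI_sol_def)
  ultimately show ?thesis
    by (simp add: L_def K_def)
qed

lemma VI_sol_imp_NE:
  assumes ths: "set ths \<subseteq> Theta" "ths \<noteq> []" and sol: "VI_sol X Df Dg g ths x y"
  shows "is_NE X f g (set ths) x"
  unfolding is_NE_def
proof (intro conjI allI ballI)
  show "x \<in> profiles X"
    using sol by (simp add: VI_sol_def)
  fix i xi assume xi: "xi \<in> X i"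
  have "(\<Sum>m<length ths. y m * g (upd x i xi) (ths ! m)) \<le> Max ((\<lambda>th. g (upd x i xi) th) ` set ths)"
    using sol by (intro prob_simplex_weighted_sum_le) (auto simp: VI_sol_def)
  then show "game_cost f g (set ths) i x \<le> game_cost f g (set ths) i (upd x i xi)"
    using VI_sol_minimizes_lagrangian[OF ths(1) sol xi] VI_sol_weighted_constraint_eq_Max[OF sol ths(2)]
    by (simp add: game_cost_def)
qed

lemma Phi_eqI:
  assumes "set ths \<subseteq> Theta" "VI_minnorm_sol X Df Dg g ths x y"
  shows "Phi X Df Dg g ths = x"
proof -
  have "(THE z. VI_minnorm_sol X Df Dg g ths (fst z) (snd z)) = (x, y)"
    using assms VI_minnorm_sol_unique by (intro the_equality) (auto simp: prod_eq_iff)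
  then show ?thesis by (simp add: Phi_def)
qed

end

definition extend_weights :: "nat list \<Rightarrow> (nat \<Rightarrow> real) \<Rightarrow> nat \<Rightarrow> real" where
  "extend_weights idx y m = (\<Sum>k<length idx. if idx ! k = m then y k else 0)"

definition restrict_weights :: "nat list \<Rightarrow> (nat \<Rightarrow> real) \<Rightarrow> nat \<Rightarrow> real" where
  "restrict_weights idx y k = (if k < length idx then y (idx ! k) else 0)"

lemma sum_extend_weights_scaleR:
  fixes v :: "nat \<Rightarrow> 'a::real_vector"
  assumes "set idx \<subseteq> {..<M}"
  shows "(\<Sum>m<M. extend_weights idx y m *\<^sub>R v m) = (\<Sum>k<length idx. y k *\<^sub>R v (idx ! k))"
proof -
  have "(\<Sum>m<M. extend_weights idx y m *\<^sub>R v m)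
      = (\<Sum>k<length idx. \<Sum>m<M. (if idx ! k = m then y k else 0) *\<^sub>R v m)"
    unfolding extend_weights_def scaleR_sum_left by (rule sum.swap)
  also have "\<dots> = (\<Sum>k<length idx. y k *\<^sub>R v (idx ! k))"
  proof (rule sum.cong[OF refl])
    fix k assume "k \<in> {..<length idx}"
    then have "idx ! k < M"
      using assms nth_mem by fastforce
    have "(\<Sum>m<M. (if idx ! k = m then y k else 0) *\<^sub>R v m) = (\<Sum>m<M. if m = idx ! k then y k *\<^sub>R v m else 0)"
      by (rule sum.cong) auto
    then show "(\<Sum>m<M. (if idx ! k = m then y k else 0) *\<^sub>R v m) = y k *\<^sub>R v (idx ! k)"
      using \<open>idx ! k < M\<close> by simp
  qed
  finally show ?thesis .
qed

lemma sum_extend_weights: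
  assumes "set idx \<subseteq> {..<M}"
  shows "(\<Sum>m<M. extend_weights idx y m * c m) = (\<Sum>k<length idx. y k * c (idx ! k))"
  using sum_extend_weights_scaleR[OF assms, of y c] by simp

lemma extend_weights_nth:
  assumes "distinct idx" "k < length idx"
  shows "extend_weights idx y (idx ! k) = y k"
proof -
  have "extend_weights idx y (idx ! k) = (\<Sum>j<length idx. if j = k then y k else 0)"
    unfolding extend_weights_def by (rule sum.cong) (use assms nth_eq_iff_index_eq in auto)
  then show ?thesis using assms by simp
qed

lemma extend_weights_notin: "m \<notin> set idx \<Longrightarrow> extend_weights idx y m = 0"
  unfolding extend_weights_def by (rule sum.neutral) auto

lemma extend_restrict_weights:
  assumes "distinct idx" "{m. y m \<noteq> 0} \<subseteq> set idx"
  shows "extend_weights idx (restrict_weights idx y) = y"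
proof
  fix m
  show "extend_weights idx (restrict_weights idx y) m = y m"
  proof (cases "m \<in> set idx")
    case True
    then obtain k where "k < length idx" "m = idx ! k"
      by (auto simp: in_set_conv_nth)
    then show ?thesis
      using extend_weights_nth[OF assms(1)] by (simp add: restrict_weights_def)
  qed (use assms(2) in \<open>auto simp: extend_weights_notin\<close>)
qed

lemma extend_weights_in_prob_simplex:
  assumes "set idx \<subseteq> {..<M}" "y \<in> prob_simplex (length idx)"
  shows "extend_weights idx y \<in> prob_simplex M"
  using assms sum_extend_weights[OF assms(1), of y "\<lambda>_. 1"] extend_weights_notin[of _ idx y]
  by (force simp: prob_simplex_def extend_weights_def intro!: sum_nonneg)

lemma restrict_weights_in_prob_simplex:
  assumes "set idx \<subseteq> {..<M}" "distinct idx" "{m. y m \<noteq> 0} \<subseteq> set idx"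
    and y: "y \<in> prob_simplex M"
  shows "restrict_weights idx y \<in> prob_simplex (length idx)"
proof -
  have "(\<Sum>k<length idx. restrict_weights idx y k) = (\<Sum>m<M. y m)"
    using sum_extend_weights[OF assms(1), of "restrict_weights idx y" "\<lambda>_. 1"]
    by (simp add: extend_restrict_weights[OF assms(2,3)])
  then show ?thesis
    using assms by (auto simp: prob_simplex_def restrict_weights_def subset_eq)
qed

lemma sqnorm_xy_extend_weights:
  assumes "set idx \<subseteq> {..<M}" "distinct idx"
  shows "sqnorm_xy M x (extend_weights idx y) = sqnorm_xy (length idx) x y"
  using sum_extend_weights[OF assms(1), of y "extend_weights idx y"]
  by (simp add: sqnorm_xy_def power2_eq_square extend_weights_nth[OF assms(2)])

lemma VI_pairing_sublist:
  assumes "set idx \<subseteq> {..<length ths}"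
  shows "VI_pairing Df Dg g (map ((!) ths) idx) x y x' y'
    = VI_pairing Df Dg g ths x (extend_weights idx y) x' (extend_weights idx y')"
  using sum_extend_weights_scaleR[OF assms, of y "\<lambda>m. Dg x (ths ! m)"]
    sum_extend_weights[OF assms, of _ "\<lambda>m. g x (ths ! m)"]
  by (simp add: VI_pairing_eq left_diff_distrib sum_subtractf)

lemma VI_sol_restrict:
  assumes idx: "set idx \<subseteq> {..<length ths}" "distinct idx" and supp: "{m. y m \<noteq> 0} \<subseteq> set idx"
    and sol: "VI_sol X Df Dg g ths x y"
  shows "VI_sol X Df Dg g (map ((!) ths) idx) x (restrict_weights idx y)"
proof -
  have "extend_weights idx (restrict_weights idx y) = y"
    by (rule extend_restrict_weights[OF idx(2) supp])
  then show ?thesis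
    using sol extend_weights_in_prob_simplex[OF idx(1)] restrict_weights_in_prob_simplex[OF idx supp]
    unfolding VI_sol_def VI_pairing_sublist[OF idx(1)] by simp
qed

text \<open>With the same constraint values, the multiplier part of the variational inequality is
  inherited from the full solution (x, y).\<close>
lemma VI_sol_extend:
  assumes idx: "set idx \<subseteq> {..<length ths}" "distinct idx" and supp: "{m. y m \<noteq> 0} \<subseteq> set idx"
    and sol: "VI_sol X Df Dg g ths x y"
    and sol': "VI_sol X Df Dg g (map ((!) ths) idx) x' y'"
    and same_g: "\<And>m. m < length ths \<Longrightarrow> g x' (ths ! m) = g x (ths ! m)"
  shows "VI_sol X Df Dg g ths x' (extend_weights idx y')"
  unfolding VI_sol_def
proof (intro conjI ballI)
  let ?y' = "extend_weights idx y'"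
  have y: "y \<in> prob_simplex (length ths)" and x: "x \<in> profiles X"
    using sol by (auto simp: VI_sol_def)
  show x': "x' \<in> profiles X" and y': "?y' \<in> prob_simplex (length ths)"
    using sol' extend_weights_in_prob_simplex[OF idx(1)] by (auto simp: VI_sol_def)
  have ext: "extend_weights idx (restrict_weights idx y) = y"
    by (rule extend_restrict_weights[OF idx(2) supp])
  fix x'' y'' assume x'': "x'' \<in> profiles X" and y'': "y'' \<in> prob_simplex (length ths)"
  have "0 \<le> VI_pairing Df Dg g ths x' ?y' x'' ?y'"
    using sol' x'' unfolding VI_sol_def VI_pairing_sublist[OF idx(1)] by simp
  moreover have "0 \<le> VI_pairing Df Dg g ths x' ?y' x' y"
    using sol' restrict_weights_in_prob_simplex[OF idx supp] y x' ext
    unfolding VI_sol_def VI_pairing_sublist[OF idx(1)] by fastforce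
  moreover have "0 \<le> VI_pairing Df Dg g ths x y x y''"
    using sol x y'' by (simp add: VI_sol_def)
  moreover have "VI_pairing Df Dg g ths x' ?y' x' y'' = VI_pairing Df Dg g ths x' ?y' x' y + VI_pairing Df Dg g ths x y x y''"
    by (simp add: VI_pairing_fixed_x same_g left_diff_distrib sum_subtractf)
  ultimately show "0 \<le> VI_pairing Df Dg g ths x' ?y' x'' y''"
    using VI_pairing_split[of Df Dg g ths x' ?y' x'' y''] by linarith
qed

locale unique_or_aggregative_game = monotone_game X f Df g Dg Theta chi_f chi_g
  for X :: "'i::finite \<Rightarrow> (real^'n::finite) set"
    and f :: "'i \<Rightarrow> real^'n^'i \<Rightarrow> real"
    and Df :: "'i \<Rightarrow> real^'n^'i \<Rightarrow> real^'n^'i"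
    and g :: "real^'n^'i \<Rightarrow> 'th \<Rightarrow> real"
    and Dg :: "real^'n^'i \<Rightarrow> 'th \<Rightarrow> real^'n^'i"
    and Theta :: "'th set"
    and chi_f chi_g :: real +
  assumes uniq_or_aggr: "\<And>S. finite S \<Longrightarrow> S \<noteq> {} \<Longrightarrow> S \<subseteq> Theta \<Longrightarrow>
          (\<exists>!x. is_NE X f g S x) \<or>
          ((\<exists>gt :: real^'n \<Rightarrow> 'th \<Rightarrow> real. \<forall>x th. th \<in> Theta \<longrightarrow> g x th = gt (aggregate x) th) \<and>
           (\<forall>x x'. is_NE X f g S x \<longrightarrow> is_NE X f g S x' \<longrightarrow> aggregate x = aggregate x'))"
begin

lemma NE_constraint_values_eq:
  assumes "finite S" "S \<noteq> {}" "S \<subseteq> Theta" "is_NE X f g S x" "is_NE X f g S x'" "th \<in> Theta"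
  shows "g x th = g x' th"
  using uniq_or_aggr[OF assms(1-3)] assms(4-6) by metis

lemma VI_minnorm_sol_restrict:
  assumes ths: "set ths \<subseteq> Theta"
    and idx: "set idx \<subseteq> {..<length ths}" "distinct idx" and supp: "{m. y m \<noteq> 0} \<subseteq> set idx"
    and minnorm: "VI_minnorm_sol X Df Dg g ths x y"
  shows "VI_minnorm_sol X Df Dg g (map ((!) ths) idx) x (restrict_weights idx y)"
  unfolding VI_minnorm_sol_def
proof (intro conjI allI impI)
  let ?ths' = "map ((!) ths) idx"
  have sol: "VI_sol X Df Dg g ths x y"
    using minnorm by (simp add: VI_minnorm_sol_def)
  show sol_restr: "VI_sol X Df Dg g ?ths' x (restrict_weights idx y)"
    by (rule VI_sol_restrict[OF idx supp sol])
  have ths': "set ?ths' \<subseteq> Theta" "?ths' \<noteq> []"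
    using ths idx(1) sol_restr prob_simplex_pos_dim by (auto simp: VI_sol_def subset_eq)
  fix x' y' assume sol': "VI_sol X Df Dg g ?ths' x' y'"
  have "g x' (ths ! m) = g x (ths ! m)" if "m < length ths" for m
    using NE_constraint_values_eq[OF finite_set _ ths'(1) VI_sol_imp_NE[OF ths' sol'] VI_sol_imp_NE[OF ths' sol_restr]]
      ths ths'(2) nth_mem[OF that] by auto
  then have "VI_sol X Df Dg g ths x' (extend_weights idx y')"
    by (rule VI_sol_extend[OF idx supp sol sol'])
  then have "sqnorm_xy (length ths) x y \<le> sqnorm_xy (length ths) x' (extend_weights idx y')"
    using minnorm by (simp add: VI_minnorm_sol_def)
  then show "sqnorm_xy (length ?ths') x (restrict_weights idx y) \<le> sqnorm_xy (length ?ths') x' y'"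
    unfolding length_map sqnorm_xy_extend_weights[OF idx, symmetric]
      extend_restrict_weights[OF idx(2) supp] .
qed

end

theorem proposition4:
  fixes X :: "'i::finite \<Rightarrow> (real^'n::finite) set"
    and f :: "'i \<Rightarrow> real^'n^'i \<Rightarrow> real"
    and Df :: "'i \<Rightarrow> real^'n^'i \<Rightarrow> real^'n^'i"
    and g :: "real^'n^'i \<Rightarrow> 'th \<Rightarrow> real"
    and Dg :: "real^'n^'i \<Rightarrow> 'th \<Rightarrow> real^'n^'i"
    and Theta :: "'th set"
    and chi_f chi_g :: real
    and M :: nat
    and \<theta> :: "nat \<Rightarrow> 'th"
    and xs :: "real^'n^'i"
    and ys :: "nat \<Rightarrow> real"
  assumes X_ne: "\<And>i. X i \<noteq> {}"
    and X_compact: "\<And>i. compact (X i)"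
    and X_convex: "\<And>i. convex (X i)"
    and cost_convex: "\<And>i th x. th \<in> Theta \<Longrightarrow> x \<in> profiles X \<Longrightarrow>
          convex_on (X i) (\<lambda>xi. f i (upd x i xi) + g (upd x i xi) th)"
    and f_twice: "\<And>i. \<exists>U. open U \<and> convex U \<and> profiles X \<subseteq> U \<and>
          (\<forall>x\<in>U. (f i has_derivative (\<lambda>h. Df i x \<bullet> h)) (at x) \<and> Df i differentiable (at x))"
    and g_twice: "\<And>th. th \<in> Theta \<Longrightarrow> \<exists>U. open U \<and> convex U \<and> profiles X \<subseteq> U \<and>
          (\<forall>x\<in>U. ((\<lambda>u. g u th) has_derivative (\<lambda>h. Dg x th \<bullet> h)) (at x) \<and>
                   (\<lambda>u. Dg u th) differentiable (at x))"
    and chi_sum: "chi_f + chi_g \<ge> 0"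
    and f_mono: "\<And>u v. (u - v) \<bullet> ((\<chi> i. (Df i u) $ i) - (\<chi> i. (Df i v) $ i))
                         \<ge> chi_f * (norm (u - v))^2"
    and g_mono: "\<And>u v th. th \<in> Theta \<Longrightarrow> (u - v) \<bullet> (Dg u th - Dg v th) \<ge> chi_g * (norm (u - v))^2"
    and uniq_or_aggr: "\<And>S. finite S \<Longrightarrow> S \<noteq> {} \<Longrightarrow> S \<subseteq> Theta \<Longrightarrow>
          (\<exists>!x. is_NE X f g S x) \<or>
          ((\<exists>gt :: real^'n \<Rightarrow> 'th \<Rightarrow> real. \<forall>x th. th \<in> Theta \<longrightarrow> g x th = gt (aggregate x) th) \<and>
           (\<forall>x x'. is_NE X f g S x \<longrightarrow> is_NE X f g S x' \<longrightarrow> aggregate x = aggregate x'))"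
    and M_pos: "0 < M"
    and samples: "\<And>m. m < M \<Longrightarrow> \<theta> m \<in> Theta"
    and minnorm: "VI_minnorm_sol X Df Dg g (map \<theta> [0..<M]) xs ys"
  shows "Phi X Df Dg g (map \<theta> (filter (\<lambda>m. ys m > 0) [0..<M])) = Phi X Df Dg g (map \<theta> [0..<M])
         \<and> Phi X Df Dg g (map \<theta> [0..<M]) = xs"
proof -
  interpret unique_or_aggregative_game X f Df g Dg Theta chi_f chi_g
    by unfold_locales (fact X_convex cost_convex f_twice g_twice chi_sum f_mono g_mono uniq_or_aggr)+
  define ths where "ths = map \<theta> [0..<M]"
  define idx where "idx = filter (\<lambda>m. ys m > 0) [0..<M]"
  have ths_Theta: "set ths \<subseteq> Theta" and idx: "set idx \<subseteq> {..<length ths}" "distinct idx"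
    using samples by (auto simp: ths_def idx_def)
  have "ys \<in> prob_simplex M"
    using minnorm by (simp add: VI_minnorm_sol_def VI_sol_def)
  then have "m < M \<and> 0 < ys m" if "ys m \<noteq> 0" for m
    using that by (cases "m < M") (auto simp: prob_simplex_def less_le)
  then have supp: "{m. ys m \<noteq> 0} \<subseteq> set idx"
    by (auto simp: idx_def)
  have "VI_minnorm_sol X Df Dg g (map ((!) ths) idx) xs (restrict_weights idx ys)"
    using VI_minnorm_sol_restrict[OF ths_Theta idx supp] minnorm by (simp add: ths_def)
  moreover have "map ((!) ths) idx = map \<theta> idx"
    using idx(1) by (simp add: ths_def subset_eq)
  moreover have "set (map \<theta> idx) \<subseteq> Theta"
    using samples by (auto simp: idx_def)
  ultimately have "Phi X Df Dg g (map \<theta> idx) = xs"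
    by (intro Phi_eqI) auto
  moreover have "Phi X Df Dg g ths = xs"
    using Phi_eqI[OF ths_Theta] minnorm by (simp add: ths_def)
  ultimately show ?thesis by (simp add: ths_def idx_def)
qed

end
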